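(* Let $k\ge4$ be an integer and $\eta\in[\eta_{k+1},\pi/k)$. If $\arg z_{2k-1}\in(0,\eta]$, then $z_{2k}\in\triangle(0,z_0,1)$, $z_{2k+1}\in\triangle(0,z_1,z_0)$, $w_{2k}\in\triangle(1,w_0,a)$ and $w_{2k+1}\in\triangle(1,w_1,w_0)$. If $\arg z_{2k-1}\in(\eta,2\eta]$, then $z_{2k}\in\triangle(0,1,z_{2k-1})$, $z_{2k+1}\in\triangle(0,z_0,1)$, $w_{2k}\in\triangle(1,a,w_{2k-1})$ and $w_{2k+1}\in\triangle(1,w_0,a)$.
   Context: For $\eta\in(0,\pi/3)$ let $a=\frac{e^{-i\eta}}{2\cos\eta}$, $c=\frac{1}{1-|a|^4}$, and for integers $j\ge0$ put $z_j=ca^{j+1}$, $w_j=1-c|a|^2a^j$. $\arg$ takes values in $[0,2\pi)$ (under the hypotheses $\arg z_{2k-1}=2\pi-2k\eta\in(0,2\eta]$). For integers $k\ge1$ let $\Phi_k(\eta)=(1-|a|^4)\sin((k-1)\eta)-|a|^3\sin((k-2)\eta)+|a|^k\sin\eta$; for each $k\ge4$, $\Phi_k$ has a unique zero in $(\pi/k,\pi/(k-1))$, denoted $\eta_k$. $\triangle(u,v,w)$ is the closed solid triangle with vertices $u,v,w$. *)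

theory Defs
  imports "HOL-Analysis.Analysis"
begin

definition aa :: "real \<Rightarrow> complex" where
  "aa \<eta> = cis (- \<eta>) / complex_of_real (2 * cos \<eta>)"

definition cc :: "real \<Rightarrow> real" where
  "cc \<eta> = 1 / (1 - cmod (aa \<eta>) ^ 4)"

definition zz :: "real \<Rightarrow> nat \<Rightarrow> complex" where
  "zz \<eta> j = complex_of_real (cc \<eta>) * aa \<eta> ^ (j + 1)"

definition ww :: "real \<Rightarrow> nat \<Rightarrow> complex" where
  "ww \<eta> j = 1 - complex_of_real (cc \<eta> * cmod (aa \<eta>) ^ 2) * aa \<eta> ^ j"

definition arg2 :: "complex \<Rightarrow> real" where
  "arg2 z = (if Arg z < 0 then Arg z + 2 * pi else Arg z)"

definition Phi :: "nat \<Rightarrow> real \<Rightarrow> real" where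
  "Phi k \<eta> = (1 - cmod (aa \<eta>) ^ 4) * sin ((real k - 1) * \<eta>)
             - cmod (aa \<eta>) ^ 3 * sin ((real k - 2) * \<eta>)
             + cmod (aa \<eta>) ^ k * sin \<eta>"

text \<open>The unique zero of Phi k in (pi/k, pi/(k-1)), for k >= 4.\<close>
definition eta_k :: "nat \<Rightarrow> real" where
  "eta_k k = (THE \<eta>. pi / real k < \<eta> \<and> \<eta> < pi / (real k - 1) \<and> Phi k \<eta> = 0)"

definition tri :: "complex \<Rightarrow> complex \<Rightarrow> complex \<Rightarrow> complex set" where
  "tri u v w = convex hull {u, v, w}"

end

theory Submission imports Defs begin

text \<open>
  Put r = |a| = 1 / (2 cos eta) and T = 2 pi - 2 k eta. Then z_j = c r^(j+1) e^(-i (j+1) eta)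
  runs along a spiral, arg z_(2k-1) = T, and z_(2k), z_(2k+1) have arguments T - eta and
  T - 2 eta; in either case each of them lies in the angular sector at 0 of the claimed
  triangle. A point rho e^(i theta) of the sector spanned by R e^(i g) and S e^(i h) lies in
  the triangle with vertices 0, R e^(i g), S e^(i h) as soon as rho/R + rho/S <= 1, and this
  holds here because rho carries the factor r^(2k) <= 1/16: already eta < pi/k <= pi/4 gives
  r^2 < 1/2.
  The statements about w_j follow because the affine map z \<mapsto> 1 - conj(a) z sends
  0, 1, z_j to 1, a, w_j and maps triangles to triangles.
\<close>

lemma polar_mem_tri:
  assumes P: "P = of_real \<rho> * cis \<theta>" and U: "U = of_real R * cis g" and V: "V = of_real S * cis h"
    and angles: "g \<le> \<theta>" "\<theta> \<le> h" "g < h" "h \<le> g + pi / 2"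
    and radii: "0 \<le> \<rho>" "0 < R" "0 < S" "\<rho> / R + \<rho> / S \<le> 1"
  shows "P \<in> tri 0 U V"
proof -
  define e t where "e = h - g" and "t = \<theta> - g"
  have e: "0 < e" "e \<le> pi / 2" and t: "0 \<le> t" "t \<le> e"
    using angles by (auto simp: e_def t_def)
  have sin_e: "sin e > 0" using e by (intro sin_gt_zero) auto
  have "0 \<le> sin t" "sin t \<le> sin e" "0 \<le> sin (e - t)" "sin (e - t) \<le> sin e"
    using e t by (auto intro!: sin_ge_zero sin_monotone_2pi_le)
  define \<alpha> \<beta> where "\<alpha> = \<rho> * sin (e - t) / (R * sin e)" and "\<beta> = \<rho> * sin t / (S * sin e)"
  have weights: "0 \<le> \<alpha>" "0 \<le> \<beta>" "\<alpha> + \<beta> \<le> 1"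
  proof -
    show "0 \<le> \<alpha>" "0 \<le> \<beta>"
      using \<open>0 \<le> sin t\<close> \<open>0 \<le> sin (e - t)\<close> radii sin_e by (simp_all add: \<alpha>_def \<beta>_def)
    have "\<alpha> \<le> \<rho> / R" "\<beta> \<le> \<rho> / S"
      using \<open>sin t \<le> sin e\<close> \<open>sin (e - t) \<le> sin e\<close> radii sin_e
      by (simp_all add: \<alpha>_def \<beta>_def divide_simps mult_left_mono)
    with radii show "\<alpha> + \<beta> \<le> 1"
      by linarith
  qed
  \<comment> \<open>sine rule: the barycentric coordinates of \<open>cis \<theta>\<close> with respect to \<open>cis g\<close> and \<open>cis h\<close>\<close>
  have sine_rule: "sin e * cis \<theta> = sin (e - t) * cis g + sin t * cis h"
    unfolding e_def t_def by (simp add: complex_eq_iff sin_diff cos_diff algebra_simps)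
  have "P = of_real (\<rho> / sin e) * (sin e * cis \<theta>)"
    using sin_e unfolding P by simp
  also have "\<dots> = \<alpha> *\<^sub>R U + \<beta> *\<^sub>R V"
    using sin_e radii unfolding sine_rule U V \<alpha>_def \<beta>_def by (simp add: scaleR_conv_of_real field_simps)
  finally show ?thesis
    unfolding tri_def convex_hull_3 using weights
    by (intro CollectI exI[of _ "1 - \<alpha> - \<beta>"] exI[of _ \<alpha>] exI[of _ \<beta>]) auto
qed

lemma tri_affine_image:
  assumes "z \<in> tri u v w"
  shows "b + m * z \<in> tri (b + m * u) (b + m * v) (b + m * w)"
proof -
  obtain \<alpha> \<beta> \<gamma> where "0 \<le> \<alpha>" "0 \<le> \<beta>" "0 \<le> \<gamma>" and sum: "\<alpha> + \<beta> + \<gamma> = 1"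
    and z: "z = \<alpha> *\<^sub>R u + \<beta> *\<^sub>R v + \<gamma> *\<^sub>R w"
    using assms unfolding tri_def convex_hull_3 by blast
  have "\<alpha> *\<^sub>R (b + m * u) + \<beta> *\<^sub>R (b + m * v) + \<gamma> *\<^sub>R (b + m * w)
      = (\<alpha> + \<beta> + \<gamma>) *\<^sub>R b + m * (\<alpha> *\<^sub>R u + \<beta> *\<^sub>R v + \<gamma> *\<^sub>R w)"
    by (simp add: scaleR_add_right scaleR_add_left mult_scaleR_right distrib_left)
  then have "b + m * z = \<alpha> *\<^sub>R (b + m * u) + \<beta> *\<^sub>R (b + m * v) + \<gamma> *\<^sub>R (b + m * w)"
    by (simp add: sum z)
  with \<open>0 \<le> \<alpha>\<close> \<open>0 \<le> \<beta>\<close> \<open>0 \<le> \<gamma>\<close> sum show ?thesis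
    unfolding tri_def convex_hull_3 by blast
qed

lemma arg2_of_real_cis:
  assumes "0 < s" "0 \<le> t" "t < 2 * pi"
  shows "arg2 (of_real s * cis t) = t"
proof (cases "t \<le> pi")
  case True
  then show ?thesis
    using assms by (simp add: arg2_def Arg_times_of_real Arg_cis)
next
  case False
  have "cis t = cis (t - 2 * pi)"
    by (simp flip: cis_divide)
  then show ?thesis
    using assms False by (simp add: arg2_def Arg_times_of_real Arg_cis)
qed

lemma cmod_aa:
  assumes "0 < cos \<eta>"
  shows "cmod (aa \<eta>) = 1 / (2 * cos \<eta>)"
  using assms by (simp add: aa_def norm_divide)

lemma aa_polar:
  assumes "0 < cos \<eta>"
  shows "aa \<eta> = of_real (cmod (aa \<eta>)) * cis (- \<eta>)"
  using assms by (simp add: cmod_aa) (simp add: aa_def)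

lemma one_minus_cnj_aa:
  assumes "cos \<eta> \<noteq> 0"
  shows "1 - cnj (aa \<eta>) = aa \<eta>"
  using assms by (simp add: aa_def complex_eq_iff field_simps)

lemma ww_eq_affine_zz: "ww \<eta> j = 1 - cnj (aa \<eta>) * zz \<eta> j"
  by (simp add: ww_def zz_def algebra_simps flip: complex_norm_square)

lemma ww_mem_tri_if_zz_mem_tri:
  assumes "zz \<eta> j \<in> tri u v w"
  shows "ww \<eta> j \<in> tri (1 - cnj (aa \<eta>) * u) (1 - cnj (aa \<eta>) * v) (1 - cnj (aa \<eta>) * w)"
  using tri_affine_image[OF assms, of 1 "- cnj (aa \<eta>)"] by (simp add: ww_eq_affine_zz)

lemma zz_polar:
  assumes "0 < cos \<eta>"
  shows "zz \<eta> j = of_real (cc \<eta> * cmod (aa \<eta>) ^ (j + 1)) * cis (- (real (j + 1) * \<eta>))"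
proof -
  have "aa \<eta> ^ (j + 1) = of_real (cmod (aa \<eta>) ^ (j + 1)) * cis (- \<eta>) ^ (j + 1)"
    by (subst aa_polar[OF assms]) (simp add: power_mult_distrib)
  moreover have "cis (- \<eta>) ^ (j + 1) = cis (- (real (j + 1) * \<eta>))"
    by (simp only: Complex.DeMoivre mult_minus_right)
  ultimately show ?thesis
    by (simp only: zz_def of_real_mult mult.assoc)
qed

lemma zz_polar_2pi_shift:
  assumes "0 < cos \<eta>" "1 \<le> k"
  shows "zz \<eta> (2 * k + j - 1) = of_real (cc \<eta> * cmod (aa \<eta>) ^ (2 * k) * cmod (aa \<eta>) ^ j)
           * cis (2 * pi - 2 * k * \<eta> - j * \<eta>)"
proof -
  have "cis (2 * pi - 2 * k * \<eta> - j * \<eta>) = cis (- (real (2 * k + j - 1 + 1) * \<eta>)) * cis (2 * pi)"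
    using assms(2) by (simp add: cis_mult of_nat_diff algebra_simps)
  then show ?thesis
    using assms(2) by (simp add: zz_polar[OF assms(1)] power_add)
qed

context
  fixes k :: nat and \<eta> :: real
  assumes k: "4 \<le> k" and \<eta>: "0 < \<eta>" "\<eta> < pi / k"
begin

lemma eta_lt_pi_quarter: "\<eta> < pi / 4"
proof -
  have "pi / k \<le> pi / 4"
    using k by (intro divide_left_mono) auto
  then show ?thesis
    using \<eta> by linarith
qed

lemma aa_cc_bounds:
  shows "0 < cos \<eta>" "0 < cmod (aa \<eta>)" "cmod (aa \<eta>) \<le> 3 / 4" "0 < cc \<eta>"
    "cmod (aa \<eta>) ^ (2 * k) \<le> 1 / 16" "cc \<eta> * cmod (aa \<eta>) ^ (2 * k) \<le> 1 / 12"
proof -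
  define r where "r = cmod (aa \<eta>)"
  show cos: "0 < cos \<eta>"
    using eta_lt_pi_quarter \<eta> by (intro cos_gt_zero) auto
  then have r: "r = 1 / (2 * cos \<eta>)"
    by (simp add: r_def cmod_aa)
  then show "0 < cmod (aa \<eta>)"
    using cos by (simp add: r_def)
  have "0 < cos (2 * \<eta>)"
    using eta_lt_pi_quarter \<eta> by (intro cos_gt_zero) auto
  then have "r\<^sup>2 < 1 / 2"
    using cos by (simp add: r cos_double_cos power_divide divide_simps power2_eq_square)
  then have "r\<^sup>2 < (3 / 4)\<^sup>2"
    by (simp add: power2_eq_square)
  then show "cmod (aa \<eta>) \<le> 3 / 4"
    using power2_less_imp_less[of r "3 / 4"] by (simp add: r_def)
  have p: "r ^ (2 * k) \<le> 1 / 16"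
  proof -
    have "r ^ (2 * k) = (r\<^sup>2) ^ k"
      by (simp add: power_mult)
    also have "\<dots> \<le> (r\<^sup>2) ^ 4"
      using \<open>r\<^sup>2 < 1 / 2\<close> k by (intro power_decreasing) auto
    also have "\<dots> \<le> (1 / 2) ^ 4"
      using \<open>r\<^sup>2 < 1 / 2\<close> by (intro power_mono) auto
    finally show ?thesis
      by (simp add: power_divide)
  qed
  then show "cmod (aa \<eta>) ^ (2 * k) \<le> 1 / 16"
    by (simp add: r_def)
  have "r ^ 4 = (r\<^sup>2)\<^sup>2"
    by simp
  also have "\<dots> < (1 / 2)\<^sup>2"
    using \<open>r\<^sup>2 < 1 / 2\<close> by (intro power_strict_mono) auto
  finally have "r ^ 4 < 1 / 4"
    by (simp add: power2_eq_square)
  then have c: "0 < cc \<eta>" "cc \<eta> \<le> 4 / 3"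
    by (simp_all add: cc_def flip: r_def) (simp_all add: field_simps)
  then show "0 < cc \<eta>"
    by simp
  show "cc \<eta> * cmod (aa \<eta>) ^ (2 * k) \<le> 1 / 12"
    using mult_mono[OF c(2) p] c(1) by (simp add: r_def)
qed

lemma zz_2k_radius_bounds:
  defines "r \<equiv> cmod (aa \<eta>)"
  shows "r ^ (2 * k) * r \<le> 1 / 16" "cc \<eta> * r ^ (2 * k) * r \<le> 1 / 12"
    "cc \<eta> * r ^ (2 * k) * r\<^sup>2 \<le> 1 / 12"
proof -
  note bounds = aa_cc_bounds[folded r_def]
  have "r \<le> 1" "r\<^sup>2 \<le> 1"
    using bounds by (simp_all add: power_le_one)
  then have "r ^ (2 * k) * r \<le> r ^ (2 * k)" "cc \<eta> * r ^ (2 * k) * r \<le> cc \<eta> * r ^ (2 * k)"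
    "cc \<eta> * r ^ (2 * k) * r\<^sup>2 \<le> cc \<eta> * r ^ (2 * k)"
    using bounds by (simp_all add: mult_left_le)
  with bounds show "r ^ (2 * k) * r \<le> 1 / 16" "cc \<eta> * r ^ (2 * k) * r \<le> 1 / 12"
    "cc \<eta> * r ^ (2 * k) * r\<^sup>2 \<le> 1 / 12"
    by linarith+
qed

lemma arg2_zz_2k_minus_1: "arg2 (zz \<eta> (2 * k - 1)) = 2 * pi - 2 * k * \<eta>"
proof -
  have "0 < 2 * k * \<eta>" "2 * k * \<eta> < 2 * pi"
    using k \<eta> by (simp_all add: field_simps)
  have "arg2 (zz \<eta> (2 * k - 1)) = arg2 (of_real (cc \<eta> * cmod (aa \<eta>) ^ (2 * k)) * cis (2 * pi - 2 * k * \<eta>))"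
    using zz_polar_2pi_shift[of \<eta> k 0] aa_cc_bounds(1) k by simp
  also have "\<dots> = 2 * pi - 2 * k * \<eta>"
    using \<open>0 < 2 * k * \<eta>\<close> \<open>2 * k * \<eta> < 2 * pi\<close> aa_cc_bounds
    by (intro arg2_of_real_cis) auto
  finally show ?thesis .
qed

lemma zz_polar_2k:
  defines "r \<equiv> cmod (aa \<eta>)" and "T \<equiv> arg2 (zz \<eta> (2 * k - 1))"
  shows "zz \<eta> (2 * k - 1) = of_real (cc \<eta> * r ^ (2 * k)) * cis T"
    and "zz \<eta> (2 * k) = of_real (cc \<eta> * r ^ (2 * k) * r) * cis (T - \<eta>)"
    and "zz \<eta> (2 * k + 1) = of_real (cc \<eta> * r ^ (2 * k) * r\<^sup>2) * cis (T - 2 * \<eta>)"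
  using zz_polar_2pi_shift[of \<eta> k 0] zz_polar_2pi_shift[of \<eta> k 1] zz_polar_2pi_shift[of \<eta> k 2]
    aa_cc_bounds(1) k unfolding r_def T_def arg2_zz_2k_minus_1
  by simp_all

lemma zz_mem_tri_small_arg:
  assumes "arg2 (zz \<eta> (2 * k - 1)) \<le> \<eta>"
  shows "zz \<eta> (2 * k) \<in> tri 0 (zz \<eta> 0) 1" and "zz \<eta> (2 * k + 1) \<in> tri 0 (zz \<eta> 1) (zz \<eta> 0)"
proof -
  define r c T where "r = cmod (aa \<eta>)" and "c = cc \<eta>" and "T = arg2 (zz \<eta> (2 * k - 1))"
  note bounds = aa_cc_bounds[folded r_def c_def] zz_2k_radius_bounds[folded r_def c_def]
  note z = zz_polar_2k[folded r_def c_def T_def]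
  have z01: "zz \<eta> 0 = of_real (c * r) * cis (- \<eta>)" "zz \<eta> 1 = of_real (c * r\<^sup>2) * cis (- (2 * \<eta>))"
    using zz_polar[OF bounds(1)] unfolding r_def c_def by (simp_all add: power2_eq_square)
  have T: "0 \<le> T" "T \<le> \<eta>"
    using assms \<eta> k arg2_zz_2k_minus_1 by (auto simp: T_def field_simps)
  show "zz \<eta> (2 * k) \<in> tri 0 (zz \<eta> 0) 1"
    by (rule polar_mem_tri[of _ "c * r ^ (2 * k) * r" "T - \<eta>" _ "c * r" "- \<eta>" _ 1 0])
      (use z z01 bounds T \<eta> eta_lt_pi_quarter in simp_all)
  show "zz \<eta> (2 * k + 1) \<in> tri 0 (zz \<eta> 1) (zz \<eta> 0)"
    by (rule polar_mem_tri[of _ "c * r ^ (2 * k) * r\<^sup>2" "T - 2 * \<eta>" _ "c * r\<^sup>2" "- (2 * \<eta>)" _ "c * r" "- \<eta>"])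
      (use z z01 bounds T \<eta> eta_lt_pi_quarter in \<open>simp_all add: power2_eq_square\<close>)
qed

lemma zz_mem_tri_large_arg:
  assumes "\<eta> < arg2 (zz \<eta> (2 * k - 1))" "arg2 (zz \<eta> (2 * k - 1)) \<le> 2 * \<eta>"
  shows "zz \<eta> (2 * k) \<in> tri 0 1 (zz \<eta> (2 * k - 1))" and "zz \<eta> (2 * k + 1) \<in> tri 0 (zz \<eta> 0) 1"
proof -
  define r c T where "r = cmod (aa \<eta>)" and "c = cc \<eta>" and "T = arg2 (zz \<eta> (2 * k - 1))"
  note bounds = aa_cc_bounds[folded r_def c_def] zz_2k_radius_bounds[folded r_def c_def]
  note z = zz_polar_2k[folded r_def c_def T_def]
  have z0: "zz \<eta> 0 = of_real (c * r) * cis (- \<eta>)"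
    using zz_polar[OF bounds(1)] unfolding r_def c_def by simp
  have T: "\<eta> < T" "T \<le> 2 * \<eta>"
    using assms unfolding T_def by auto
  show "zz \<eta> (2 * k) \<in> tri 0 1 (zz \<eta> (2 * k - 1))"
    by (rule polar_mem_tri[of _ "c * r ^ (2 * k) * r" "T - \<eta>" _ 1 0 _ "c * r ^ (2 * k)" T])
      (use z bounds T \<eta> eta_lt_pi_quarter in simp_all)
  show "zz \<eta> (2 * k + 1) \<in> tri 0 (zz \<eta> 0) 1"
    by (rule polar_mem_tri[of _ "c * r ^ (2 * k) * r\<^sup>2" "T - 2 * \<eta>" _ "c * r" "- \<eta>" _ 1 0])
      (use z z0 bounds T \<eta> eta_lt_pi_quarter in \<open>simp_all add: power2_eq_square\<close>)
qed

end

lemma mem_tri_small_arg: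
  assumes "4 \<le> k" "\<eta> < pi / k" "0 < arg2 (zz \<eta> (2*k - 1))" "arg2 (zz \<eta> (2*k - 1)) \<le> \<eta>"
  shows "zz \<eta> (2*k) \<in> tri 0 (zz \<eta> 0) 1 \<and> zz \<eta> (2*k + 1) \<in> tri 0 (zz \<eta> 1) (zz \<eta> 0) \<and>
    ww \<eta> (2*k) \<in> tri 1 (ww \<eta> 0) (aa \<eta>) \<and> ww \<eta> (2*k + 1) \<in> tri 1 (ww \<eta> 1) (ww \<eta> 0)"
proof -
  have "0 < \<eta>"
    using assms(3,4) by linarith
  note z = zz_mem_tri_small_arg[OF assms(1) this assms(2) assms(4)]
  have "cos \<eta> \<noteq> 0"
    using aa_cc_bounds(1)[OF assms(1) \<open>0 < \<eta>\<close> assms(2)] by simp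
  with z ww_mem_tri_if_zz_mem_tri[OF z(1)] ww_mem_tri_if_zz_mem_tri[OF z(2)] show ?thesis
    by (simp add: ww_eq_affine_zz one_minus_cnj_aa)
qed

lemma mem_tri_large_arg:
  assumes "4 \<le> k" "\<eta> < pi / k" "\<eta> < arg2 (zz \<eta> (2*k - 1))" "arg2 (zz \<eta> (2*k - 1)) \<le> 2 * \<eta>"
  shows "zz \<eta> (2*k) \<in> tri 0 1 (zz \<eta> (2*k - 1)) \<and> zz \<eta> (2*k + 1) \<in> tri 0 (zz \<eta> 0) 1 \<and>
    ww \<eta> (2*k) \<in> tri 1 (aa \<eta>) (ww \<eta> (2*k - 1)) \<and> ww \<eta> (2*k + 1) \<in> tri 1 (ww \<eta> 0) (aa \<eta>)"
proof -
  have "0 < \<eta>"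
    using assms(3,4) by linarith
  note z = zz_mem_tri_large_arg[OF assms(1) this assms(2) assms(3,4)]
  have "cos \<eta> \<noteq> 0"
    using aa_cc_bounds(1)[OF assms(1) \<open>0 < \<eta>\<close> assms(2)] by simp
  with z ww_mem_tri_if_zz_mem_tri[OF z(1)] ww_mem_tri_if_zz_mem_tri[OF z(2)] show ?thesis
    by (simp add: ww_eq_affine_zz one_minus_cnj_aa)
qed

theorem lemma6p5:
  fixes k :: nat and \<eta> :: real
  assumes "k \<ge> 4"
    and "eta_k (k + 1) \<le> \<eta>" and "\<eta> < pi / real k"
  shows "(0 < arg2 (zz \<eta> (2*k - 1)) \<and> arg2 (zz \<eta> (2*k - 1)) \<le> \<eta> \<longrightarrow>
            zz \<eta> (2*k) \<in> tri 0 (zz \<eta> 0) 1 \<and>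
            zz \<eta> (2*k + 1) \<in> tri 0 (zz \<eta> 1) (zz \<eta> 0) \<and>
            ww \<eta> (2*k) \<in> tri 1 (ww \<eta> 0) (aa \<eta>) \<and>
            ww \<eta> (2*k + 1) \<in> tri 1 (ww \<eta> 1) (ww \<eta> 0))
       \<and> (\<eta> < arg2 (zz \<eta> (2*k - 1)) \<and> arg2 (zz \<eta> (2*k - 1)) \<le> 2 * \<eta> \<longrightarrow>
            zz \<eta> (2*k) \<in> tri 0 1 (zz \<eta> (2*k - 1)) \<and>
            zz \<eta> (2*k + 1) \<in> tri 0 (zz \<eta> 0) 1 \<and>
            ww \<eta> (2*k) \<in> tri 1 (aa \<eta>) (ww \<eta> (2*k - 1)) \<and>
            ww \<eta> (2*k + 1) \<in> tri 1 (ww \<eta> 0) (aa \<eta>))"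
  using mem_tri_small_arg[OF assms(1,3)] mem_tri_large_arg[OF assms(1,3)] by blast

end
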